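(* Let $\mathfrak g$ be a real Lie algebra, $r\in\mathfrak g\otimes\mathfrak g$, $\alpha=(r-r^t)/2$, $\beta=(r+r^t)/2$ (as maps $\mathfrak g^*\to\mathfrak g$), and suppose $\beta$ is invariant. Let $\hat{\mathfrak g}=\mathfrak g\otimes\mathbb C=\mathfrak g\oplus i\mathfrak g$ regarded as a real Lie algebra. The following are equivalent: (1) $r$ is a solution of the type II CYBE $[r_{12},r_{13}]+[r_{12},r_{23}]+[r_{13},r_{23}]=\frac12[r_{13}+r_{31},r_{23}+r_{32}]$; (2) $[\alpha(a^* ),\alpha(b^* )]-\alpha(\mathrm{ad}^*(\alpha(a^* ))b^*-\mathrm{ad}^*(\alpha(b^* ))a^* )=[\beta(a^* ),\beta(b^* )]$ for all $a^*,b^*\in\mathfrak g^*$; (3) for the sign $+$ and for the sign $-$, $(\alpha\pm i\beta)([a^*,b^*]_\delta)=[(\alpha\pm i\beta)(a^* ),(\alpha\pm i\beta)(b^* )]_{\hat{\mathfrak g}}$ for all $a^*,b^*\in\mathfrak g^*$, where $[a^*,b^*]_\delta=\mathrm{ad}^*(\alpha(a^* ))b^*-\mathrm{ad}^*(\alpha(b^* ))a^*$ and $(\alpha\pm i\beta)(a^* )=\alpha(a^* )\pm i\beta(a^* )\in\hat{\mathfrak g}$.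
   Context: $\mathfrak g$ finite-dimensional. $r\in\mathfrak g\otimes\mathfrak g$ is identified with $r:\mathfrak g^*\to\mathfrak g$ by $\langle r(a^* ),b^*\rangle=\langle a^*\otimes b^*,r\rangle$; $r^t$ is induced by $\sigma(r)$ with $\sigma(x\otimes y)=y\otimes x$. $\beta$ invariant means $(\mathrm{ad}(x)\otimes\mathrm{id}+\mathrm{id}\otimes\mathrm{ad}(x))\beta=0$ for all $x$. $\langle\mathrm{ad}^*(x)a^*,y\rangle=-\langle a^*,[x,y]\rangle$. For $r=\sum_i a_i\otimes b_i$: $[r_{12},r_{13}]=\sum[a_i,a_j]\otimes b_i\otimes b_j$, $[r_{12},r_{23}]=\sum a_i\otimes[b_i,a_j]\otimes b_j$, $[r_{13},r_{23}]=\sum a_i\otimes a_j\otimes[b_i,b_j]$; with $r+\sigma(r)=\sum_k c_k\otimes d_k$, $[r_{13}+r_{31},r_{23}+r_{32}]=\sum_{k,l}c_k\otimes c_l\otimes[d_k,d_l]$. The bracket of $\hat{\mathfrak g}$ is $[x+iy,x'+iy']=[x,x']-[y,y']+i([x,y']+[y,x'])$. *)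

theory Defs
  imports "HOL-Analysis.Analysis"
begin

text \<open>A finite-dimensional real Lie algebra g is modelled on
  real^'n (basis axis i 1); its dual g* is real^'n with the dual basis, the pairing
  being the inner product. A tensor in g (x) g is its coefficient matrix real^'n^'n
  (r = sum r$i$j e_i (x) e_j); g (x) g (x) g is real^'n^'n^'n.\<close>

definition lie_algebra :: "(real^'n \<Rightarrow> real^'n \<Rightarrow> real^'n) \<Rightarrow> bool" where
  "lie_algebra br \<longleftrightarrow> bilinear br \<and> (\<forall>x. br x x = 0) \<and>
     (\<forall>x y z. br x (br y z) + br y (br z x) + br z (br x y) = 0)"

definition bvec :: "'n::finite \<Rightarrow> real^'n" where
  "bvec i = axis i 1"

definition t2 :: "real^'n \<Rightarrow> real^'n \<Rightarrow> real^'n^'n" where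
  "t2 x y = (\<chi> p q. x$p * y$q)"

definition t3 :: "real^'n \<Rightarrow> real^'n \<Rightarrow> real^'n \<Rightarrow> real^'n^'n^'n" where
  "t3 x y z = (\<chi> p q s. x$p * y$q * z$s)"

text \<open>sigma(r) = x(x)y |-> y(x)x, i.e. the transposed coefficient matrix.\<close>
definition flip :: "real^'n^'n \<Rightarrow> real^'n^'n" where
  "flip r = transpose r"

text \<open>r as a map g* -> g: <r(a*), b*> = <a* (x) b*, r>.\<close>
definition tmap :: "real^'n^'n \<Rightarrow> real^'n \<Rightarrow> real^'n" where
  "tmap r a = (\<chi> j. \<Sum>i\<in>UNIV. a$i * r$i$j)"

definition alpha_of :: "real^'n^'n \<Rightarrow> real^'n \<Rightarrow> real^'n" where
  "alpha_of r a = (1/2) *\<^sub>R (tmap r a - tmap (flip r) a)"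

definition beta_of :: "real^'n^'n \<Rightarrow> real^'n \<Rightarrow> real^'n" where
  "beta_of r a = (1/2) *\<^sub>R (tmap r a + tmap (flip r) a)"

definition beta_tensor :: "real^'n^'n \<Rightarrow> real^'n^'n" where
  "beta_tensor r = (1/2) *\<^sub>R (r + flip r)"

definition invariant_tensor :: "(real^'n \<Rightarrow> real^'n \<Rightarrow> real^'n) \<Rightarrow> real^'n^'n \<Rightarrow> bool" where
  "invariant_tensor br b \<longleftrightarrow> (\<forall>x. (\<Sum>i\<in>UNIV. \<Sum>j\<in>UNIV.
      b$i$j *\<^sub>R (t2 (br x (bvec i)) (bvec j) + t2 (bvec i) (br x (bvec j)))) = 0)"

text \<open>Coadjoint action: <ad*(x) a*, y> = - <a*, [x,y]>.\<close>
definition coad :: "(real^'n \<Rightarrow> real^'n \<Rightarrow> real^'n) \<Rightarrow> real^'n \<Rightarrow> real^'n \<Rightarrow> real^'n" where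
  "coad br x a = (\<chi> i. - (a \<bullet> br x (bvec i)))"

text \<open>Left-hand side [r12,r13]+[r12,r23]+[r13,r23] of the CYBE.\<close>
definition cybe_lhs :: "(real^'n \<Rightarrow> real^'n \<Rightarrow> real^'n) \<Rightarrow> real^'n^'n \<Rightarrow> real^'n^'n^'n" where
  "cybe_lhs br r = (\<Sum>i\<in>UNIV. \<Sum>j\<in>UNIV. \<Sum>k\<in>UNIV. \<Sum>l\<in>UNIV. (r$i$j * r$k$l) *\<^sub>R
      (t3 (br (bvec i) (bvec k)) (bvec j) (bvec l)
     + t3 (bvec i) (br (bvec j) (bvec k)) (bvec l)
     + t3 (bvec i) (bvec k) (br (bvec j) (bvec l))))"

text \<open>[r13 + r31, r23 + r32] with r + sigma(r) = sum_{k} c_k (x) d_k.\<close>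
definition cybe_rhs_term :: "(real^'n \<Rightarrow> real^'n \<Rightarrow> real^'n) \<Rightarrow> real^'n^'n \<Rightarrow> real^'n^'n^'n" where
  "cybe_rhs_term br r = (let s = r + flip r in
     (\<Sum>i\<in>UNIV. \<Sum>j\<in>UNIV. \<Sum>k\<in>UNIV. \<Sum>l\<in>UNIV. (s$i$j * s$k$l) *\<^sub>R
        t3 (bvec i) (bvec k) (br (bvec j) (bvec l))))"

definition typeII_CYBE :: "(real^'n \<Rightarrow> real^'n \<Rightarrow> real^'n) \<Rightarrow> real^'n^'n \<Rightarrow> bool" where
  "typeII_CYBE br r \<longleftrightarrow> cybe_lhs br r = (1/2) *\<^sub>R cybe_rhs_term br r"

definition delta_br :: "(real^'n \<Rightarrow> real^'n \<Rightarrow> real^'n) \<Rightarrow> real^'n^'n \<Rightarrow> real^'n \<Rightarrow> real^'n \<Rightarrow> real^'n" where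
  "delta_br br r a b = coad br (alpha_of r a) b - coad br (alpha_of r b) a"

text \<open>The complexification g^ = g + i g as a real Lie algebra, elements (x,y) = x + i y.\<close>
definition cplx_br :: "(real^'n \<Rightarrow> real^'n \<Rightarrow> real^'n) \<Rightarrow> ((real^'n) \<times> (real^'n)) \<Rightarrow> ((real^'n) \<times> (real^'n)) \<Rightarrow> ((real^'n) \<times> (real^'n))" where
  "cplx_br br u v = (br (fst u) (fst v) - br (snd u) (snd v), br (fst u) (snd v) + br (snd u) (fst v))"

text \<open>(alpha + s i beta)(a*) for s = 1 or s = -1.\<close>
definition alpha_pm_ibeta :: "real \<Rightarrow> real^'n^'n \<Rightarrow> real^'n \<Rightarrow> (real^'n) \<times> (real^'n)" where
  "alpha_pm_ibeta s r a = (alpha_of r a, s *\<^sub>R beta_of r a)"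

end

theory Submission imports Defs begin

(* Write A = alpha_of r and B = beta_of r, so that r = A + B and
   sigma(r) = B - A as maps from the dual space to g, with A skew and B symmetric
   for the pairing.
   (1) <-> (2): pair the type II CYBE tensor with a tensor product of three covectors
   a, b, c.  This gives a trilinear form cybe_form whose values on basis covectors are
   exactly the coordinates of the CYBE defect, so (1) says cybe_form vanishes.
   Expanding r = A + B and using skewness of A together with the invariance of beta
   (in the form <[x, B y], z> = - <[x, B z], y>) turns cybe_form into
   the pairing of [Aa,Ab] - A[a,b]_delta - [Ba,Bb] with c, which vanishes for all c
   iff (2) holds.
   (2) <-> (3): invariance also gives B[a,b]_delta = [Aa,Bb] + [Ba,Ab], so the
   imaginary part of the equation in (3) holds automatically for either sign, and
   its real part is exactly (2). *)

lemma vec_basis_expansion: "(x::real^'n) = (\<Sum>i\<in>UNIV. x$i *\<^sub>R bvec i)"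
  using basis_expansion[of x] by (simp add: bvec_def scalar_mult_eq_scaleR)

lemma linear_zero_on_basis:
  fixes f :: "real^'n \<Rightarrow> real"
  assumes "linear f" "\<And>i. f (bvec i) = 0"
  shows "f x = 0"
proof -
  have "f x = f (\<Sum>i\<in>UNIV. x$i *\<^sub>R bvec i)" using vec_basis_expansion[of x] by simp
  also have "\<dots> = (\<Sum>i\<in>UNIV. x$i * f (bvec i))"
    by (simp add: linear_sum[OF assms(1)] linear_scale[OF assms(1)])
  finally show ?thesis using assms(2) by simp
qed

lemma bvec_component: "bvec i $ j = (if i = j then 1 else 0)"
  by (simp add: bvec_def axis_def)

lemma inner_bvec: "x \<bullet> bvec i = x $ i" by (simp add: bvec_def inner_axis)
lemma inner_bvec': "bvec i \<bullet> x = x $ i" by (simp add: bvec_def inner_axis')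

lemma sum_bvec_component: "(\<Sum>i\<in>UNIV. bvec p $ i * f i) = (f p :: real)"
proof -
  have "(\<Sum>i\<in>UNIV. bvec p $ i * f i) = (\<Sum>i\<in>UNIV. if p = i then f i else 0)"
    by (rule sum.cong) (auto simp: bvec_component)
  then show ?thesis by simp
qed

definition struct_const :: "(real^'n \<Rightarrow> real^'n \<Rightarrow> real^'n) \<Rightarrow> 'n \<Rightarrow> 'n \<Rightarrow> 'n \<Rightarrow> real" where
  "struct_const br j l s = br (bvec j) (bvec l) $ s"

lemma bilinear_component:
  assumes "bilinear br"
  shows "br x y $ s = (\<Sum>j\<in>UNIV. \<Sum>l\<in>UNIV. x$j * y$l * struct_const br j l s)"
proof -
  have "br x y = br (\<Sum>j\<in>UNIV. x$j *\<^sub>R bvec j) (\<Sum>l\<in>UNIV. y$l *\<^sub>R bvec l)"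
    using vec_basis_expansion[of x] vec_basis_expansion[of y] by simp
  also have "\<dots> = (\<Sum>(j,l)\<in>UNIV \<times> UNIV. (x$j * y$l) *\<^sub>R br (bvec j) (bvec l))"
    by (simp add: bilinear_sum[OF assms] bilinear_lmul[OF assms] bilinear_rmul[OF assms]
        split_def mult.commute)
  finally show ?thesis by (simp add: sum.cartesian_product split_def struct_const_def)
qed

lemma bilinear_component_right:
  assumes "bilinear br"
  shows "br x y $ p = (\<Sum>l\<in>UNIV. y$l * br x (bvec l) $ p)"
proof -
  have "br x y = br x (\<Sum>l\<in>UNIV. y$l *\<^sub>R bvec l)" using vec_basis_expansion[of y] by simp
  also have "\<dots> = (\<Sum>l\<in>UNIV. y$l *\<^sub>R br x (bvec l))"
    using assms by (simp add: bilinear_def linear_sum linear_scale)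
  finally show ?thesis by simp
qed

lemma flip_component: "flip r $ i $ j = r $ j $ i"
  by (simp add: flip_def transpose_def)

lemma t2_component_left: "t2 u (bvec j) $ p $ q = (if j = q then u $ p else 0)"
  by (simp add: t2_def bvec_component)
lemma t2_component_right: "t2 (bvec i) v $ p $ q = (if i = p then v $ q else 0)"
  by (simp add: t2_def bvec_component)

lemma t3_component_1: "t3 u (bvec j) (bvec l) $ p $ q $ s = (if j = q then if l = s then u$p else 0 else 0)"
  by (simp add: t3_def bvec_component)
lemma t3_component_2: "t3 (bvec i) u (bvec l) $ p $ q $ s = (if i = p then if l = s then u$q else 0 else 0)"
  by (simp add: t3_def bvec_component)
lemma t3_component_3: "t3 (bvec i) (bvec k) u $ p $ q $ s = (if i = p then if k = q then u$s else 0 else 0)"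
  by (simp add: t3_def bvec_component)

lemma times_if_zero: "(a::real) * (if P then b else 0) = (if P then a * b else 0)" by simp

lemma sum_if_zero: "(\<Sum>j\<in>S. if P then f j else (0::real)) = (if P then (\<Sum>j\<in>S. f j) else 0)"
  by simp

lemma tmap_bvec: "tmap r (bvec p) $ j = r$p$j"
  by (simp add: tmap_def sum_bvec_component)

lemma tmap_add: "tmap r (a + b) = tmap r a + tmap r b"
  by (simp add: tmap_def vec_eq_iff sum.distrib algebra_simps)
lemma tmap_diff: "tmap r (a - b) = tmap r a - tmap r b"
  by (simp add: tmap_def vec_eq_iff sum_subtractf algebra_simps)
lemma tmap_scale: "tmap r (c *\<^sub>R a) = c *\<^sub>R tmap r a"
  by (simp add: tmap_def vec_eq_iff sum_distrib_left algebra_simps)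
lemma tmap_radd: "tmap (r + s) a = tmap r a + tmap s a"
  by (simp add: tmap_def vec_eq_iff sum.distrib algebra_simps)
lemma tmap_rscale: "tmap (c *\<^sub>R r) a = c *\<^sub>R tmap r a"
  by (simp add: tmap_def vec_eq_iff sum_distrib_left algebra_simps)

lemma tmap_flip_adjoint: "tmap r a \<bullet> b = tmap (flip r) b \<bullet> a"
  by (simp add: tmap_def flip_def inner_vec_def transpose_def sum_distrib_left
      sum_distrib_right mult_ac) (rule sum.swap)

lemma tmap_alpha_beta: "tmap r a = alpha_of r a + beta_of r a"
  by (simp add: alpha_of_def beta_of_def algebra_simps scaleR_2[symmetric])
lemma tmap_flip_alpha_beta: "tmap (flip r) a = beta_of r a - alpha_of r a"
  by (simp add: alpha_of_def beta_of_def algebra_simps scaleR_2[symmetric])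
lemma tmap_symmetrization: "tmap (r + flip r) a = 2 *\<^sub>R beta_of r a"
  by (simp add: beta_of_def tmap_radd)
lemma beta_of_tensor: "beta_of r a = tmap (beta_tensor r) a"
  by (simp add: beta_of_def beta_tensor_def tmap_radd tmap_rscale)

lemma alpha_skew: "alpha_of r a \<bullet> b = - (alpha_of r b \<bullet> a)"
  using tmap_flip_adjoint[of r a b] tmap_flip_adjoint[of "flip r" a b]
  by (simp add: alpha_of_def flip_def inner_diff_left) (simp add: field_simps)
lemma beta_sym: "beta_of r a \<bullet> b = beta_of r b \<bullet> a"
  using tmap_flip_adjoint[of r a b] tmap_flip_adjoint[of "flip r" a b]
  by (simp add: beta_of_def flip_def inner_add_left)

lemma beta_add: "beta_of r (a + b) = beta_of r a + beta_of r b"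
  by (simp add: beta_of_def tmap_add algebra_simps)
lemma beta_diff: "beta_of r (a - b) = beta_of r a - beta_of r b"
  by (simp add: beta_of_def tmap_diff algebra_simps)
lemma beta_scale: "beta_of r (c *\<^sub>R a) = c *\<^sub>R beta_of r a"
  by (simp add: beta_of_def tmap_scale algebra_simps)

lemma beta_tensor_sym: "beta_tensor r $ i $ j = beta_tensor r $ j $ i"
  by (simp add: beta_tensor_def flip_def transpose_def)

lemma lie_bracket_antisym:
  assumes "lie_algebra br" shows "br x y = - br y x"
proof -
  have bl: "bilinear br" and z: "\<And>x. br x x = 0" using assms by (auto simp: lie_algebra_def)
  have "br (x + y) (x + y) = br x x + br x y + br y x + br y y"
    by (simp add: bilinear_ladd[OF bl] bilinear_radd[OF bl])
  then show ?thesis using z[of x] z[of y] z[of "x+y"] by (simp add: eq_neg_iff_add_eq_0)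
qed

lemma coad_pairing:
  assumes "bilinear br"
  shows "coad br x b \<bullet> y = - (b \<bullet> br x y)"
proof -
  have "linear (\<lambda>y. coad br x b \<bullet> y + b \<bullet> br x y)"
    by (rule linearI) (simp_all add: bilinear_radd[OF assms] bilinear_rmul[OF assms]
        inner_add_right algebra_simps)
  moreover have "\<And>i. coad br x b \<bullet> bvec i + b \<bullet> br x (bvec i) = 0"
    by (simp add: inner_bvec coad_def)
  ultimately have "coad br x b \<bullet> y + b \<bullet> br x y = 0" by (rule linear_zero_on_basis)
  then show ?thesis by simp
qed

lemma invariant_tensor_component:
  assumes "invariant_tensor br T"
  shows "(\<Sum>i\<in>UNIV. T$i$q * br x (bvec i) $ p) + (\<Sum>j\<in>UNIV. T$p$j * br x (bvec j) $ q) = 0"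
proof -
  have "(\<Sum>i\<in>UNIV. \<Sum>j\<in>UNIV.
      T$i$j *\<^sub>R (t2 (br x (bvec i)) (bvec j) + t2 (bvec i) (br x (bvec j)))) $ p $ q = 0"
    using assms by (simp add: invariant_tensor_def)
  then show ?thesis
    by (simp add: t2_component_left t2_component_right distrib_left sum.distrib
        times_if_zero sum_if_zero)
qed

lemma invariant_beta_skew:
  assumes bl: "bilinear br" and inv: "invariant_tensor br (beta_tensor r)"
  shows "b \<bullet> br x (beta_of r y) + y \<bullet> br x (beta_of r b) = 0"
proof -
  let ?T = "beta_tensor r"
  have on_basis: "bvec p \<bullet> br x (beta_of r (bvec q)) + bvec q \<bullet> br x (beta_of r (bvec p)) = 0"
    for p q
  proof -
    have "bvec p \<bullet> br x (beta_of r (bvec q)) = (\<Sum>l\<in>UNIV. ?T$l$q * br x (bvec l) $ p)"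
      unfolding inner_bvec' beta_of_tensor
      by (subst bilinear_component_right[OF bl], rule sum.cong)
        (simp_all add: tmap_bvec beta_tensor_sym[of r q])
    moreover have "bvec q \<bullet> br x (beta_of r (bvec p)) = (\<Sum>l\<in>UNIV. ?T$p$l * br x (bvec l) $ q)"
      unfolding inner_bvec' beta_of_tensor
      by (subst bilinear_component_right[OF bl]) (simp add: tmap_bvec)
    ultimately show ?thesis using invariant_tensor_component[OF inv, of q x p] by simp
  qed
  have lin: "linear (\<lambda>b. b \<bullet> br x (beta_of r y) + y \<bullet> br x (beta_of r b))" for y
    by (rule linearI) (simp_all add: bilinear_radd[OF bl] bilinear_rmul[OF bl] beta_add
        beta_scale inner_add_right inner_add_left algebra_simps)
  have "bvec p \<bullet> br x (beta_of r y) + y \<bullet> br x (beta_of r (bvec p)) = 0" for p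
  proof -
    have "linear (\<lambda>y. bvec p \<bullet> br x (beta_of r y) + y \<bullet> br x (beta_of r (bvec p)))"
      by (rule linearI) (simp_all add: bilinear_radd[OF bl] bilinear_rmul[OF bl] beta_add
          beta_scale inner_add_right inner_add_left algebra_simps)
    then show ?thesis using linear_zero_on_basis on_basis by fastforce
  qed
  then show ?thesis using linear_zero_on_basis[OF lin[of y], of b] by simp
qed

lemma beta_coad:
  assumes bl: "bilinear br" and inv: "invariant_tensor br (beta_tensor r)"
  shows "beta_of r (coad br x b) = br x (beta_of r b)"
proof -
  have "beta_of r (coad br x b) \<bullet> c = br x (beta_of r b) \<bullet> c" for c
  proof -
    have "beta_of r (coad br x b) \<bullet> c = coad br x b \<bullet> beta_of r c"
      by (metis beta_sym inner_commute)
    also have "\<dots> = - (b \<bullet> br x (beta_of r c))" by (rule coad_pairing[OF bl])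
    also have "\<dots> = br x (beta_of r b) \<bullet> c"
      using invariant_beta_skew[OF bl inv, of b x c] by (simp add: inner_commute)
    finally show ?thesis .
  qed
  then show ?thesis using vector_eq_rdot by blast
qed

lemma beta_delta_br:
  assumes la: "lie_algebra br" and inv: "invariant_tensor br (beta_tensor r)"
  shows "beta_of r (delta_br br r a b)
           = br (alpha_of r a) (beta_of r b) + br (beta_of r a) (alpha_of r b)"
proof -
  have bl: "bilinear br" using la by (simp add: lie_algebra_def)
  show ?thesis
    unfolding delta_br_def beta_diff beta_coad[OF bl inv]
    using lie_bracket_antisym[OF la, of "alpha_of r b" "beta_of r a"] by simp
qed

lemma alpha_delta_pairing:
  assumes bl: "bilinear br"
  shows "alpha_of r (delta_br br r a b) \<bullet> c
     = b \<bullet> br (alpha_of r a) (alpha_of r c) - a \<bullet> br (alpha_of r b) (alpha_of r c)"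
proof -
  have "alpha_of r (delta_br br r a b) \<bullet> c = - (delta_br br r a b \<bullet> alpha_of r c)"
    by (simp add: alpha_skew inner_commute)
  also have "\<dots> = b \<bullet> br (alpha_of r a) (alpha_of r c) - a \<bullet> br (alpha_of r b) (alpha_of r c)"
    by (simp add: delta_br_def inner_diff_left coad_pairing[OF bl])
  finally show ?thesis .
qed

text \<open>The CYBE defect \<open>[r12,r13] + [r12,r23] + [r13,r23] - \<frac>1 2[r13+r31, r23+r32]\<close>
  paired with \<open>a* \<otimes> b* \<otimes> c*\<close>, written through the maps \<open>r\<close> and \<open>\<sigma>(r)\<close>.\<close>
definition cybe_form ::
  "(real^'n \<Rightarrow> real^'n \<Rightarrow> real^'n) \<Rightarrow> real^'n^'n \<Rightarrow> real^'n \<Rightarrow> real^'n \<Rightarrow> real^'n \<Rightarrow> real" where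
  "cybe_form br r a b c = br (tmap r a) (tmap r b) \<bullet> c + br (tmap r a) (tmap (flip r) c) \<bullet> b
     + br (tmap (flip r) b) (tmap (flip r) c) \<bullet> a
     - (1/2) * (br (tmap (r + flip r) a) (tmap (r + flip r) b) \<bullet> c)"

lemma cybe_lhs_component:
  "cybe_lhs br r $ p $ q $ s =
     (\<Sum>i\<in>UNIV. \<Sum>k\<in>UNIV. r$i$q * r$k$s * struct_const br i k p)
   + (\<Sum>j\<in>UNIV. \<Sum>k\<in>UNIV. r$p$j * r$k$s * struct_const br j k q)
   + (\<Sum>j\<in>UNIV. \<Sum>l\<in>UNIV. r$p$j * r$q$l * struct_const br j l s)"
  unfolding cybe_lhs_def
  by (simp add: t3_component_1 t3_component_2 t3_component_3 distrib_left sum.distrib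
      times_if_zero sum_if_zero struct_const_def[symmetric])

lemma cybe_rhs_component:
  "cybe_rhs_term br r $ p $ q $ s =
     (\<Sum>j\<in>UNIV. \<Sum>l\<in>UNIV. (r$p$j + r$j$p) * (r$q$l + r$l$q) * struct_const br j l s)"
  unfolding cybe_rhs_term_def Let_def
  by (simp add: t3_component_3 times_if_zero sum_if_zero struct_const_def[symmetric]
      flip_component)

lemma cybe_form_basis:
  assumes bl: "bilinear br"
  shows "cybe_form br r (bvec p) (bvec q) (bvec s) =
     (\<Sum>j\<in>UNIV. \<Sum>l\<in>UNIV. r$p$j * r$q$l * struct_const br j l s)
   + (\<Sum>j\<in>UNIV. \<Sum>l\<in>UNIV. r$p$j * r$l$s * struct_const br j l q)
   + (\<Sum>j\<in>UNIV. \<Sum>l\<in>UNIV. r$j$q * r$l$s * struct_const br j l p)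
   - (1/2) * (\<Sum>j\<in>UNIV. \<Sum>l\<in>UNIV. (r$p$j + r$j$p) * (r$q$l + r$l$q) * struct_const br j l s)"
  unfolding cybe_form_def inner_bvec bilinear_component[OF bl] tmap_bvec
  by (simp add: flip_component)

lemma cybe_defect_component:
  assumes "bilinear br"
  shows "(cybe_lhs br r - (1/2) *\<^sub>R cybe_rhs_term br r) $ p $ q $ s
           = cybe_form br r (bvec p) (bvec q) (bvec s)"
  by (simp add: cybe_lhs_component cybe_rhs_component cybe_form_basis[OF assms])

lemma cybe_form_zero_on_basis:
  assumes bl: "bilinear br" and zero: "\<And>p q s. cybe_form br r (bvec p) (bvec q) (bvec s) = 0"
  shows "cybe_form br r a b c = 0"
proof -
  have lin1: "linear (\<lambda>a. cybe_form br r a b c)" for b c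
    by (rule linearI) (simp_all add: cybe_form_def tmap_add tmap_scale bilinear_ladd[OF bl]
        bilinear_lmul[OF bl] inner_add_right inner_add_left algebra_simps)
  have lin2: "linear (\<lambda>b. cybe_form br r a b c)" for a c
    by (rule linearI) (simp_all add: cybe_form_def tmap_add tmap_scale bilinear_ladd[OF bl]
        bilinear_lmul[OF bl] bilinear_radd[OF bl] bilinear_rmul[OF bl] inner_add_right
        inner_add_left algebra_simps)
  have lin3: "linear (\<lambda>c. cybe_form br r a b c)" for a b
    by (rule linearI) (simp_all add: cybe_form_def tmap_add tmap_scale bilinear_radd[OF bl]
        bilinear_rmul[OF bl] inner_add_right algebra_simps)
  have "cybe_form br r (bvec p) b (bvec s) = 0" for p s
    using linear_zero_on_basis[OF lin2] zero by blast
  then have "cybe_form br r a b (bvec s) = 0" for s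
    using linear_zero_on_basis[OF lin1] by blast
  then show ?thesis using linear_zero_on_basis[OF lin3] by blast
qed

lemma typeII_CYBE_iff_cybe_form:
  assumes "bilinear br"
  shows "typeII_CYBE br r \<longleftrightarrow> (\<forall>a b c. cybe_form br r a b c = 0)"
proof -
  have "typeII_CYBE br r \<longleftrightarrow> (\<forall>p q s. cybe_form br r (bvec p) (bvec q) (bvec s) = 0)"
    unfolding typeII_CYBE_def
    by (subst eq_iff_diff_eq_0) (simp add: vec_eq_iff cybe_defect_component[OF assms, symmetric])
  then show ?thesis using cybe_form_zero_on_basis[OF assms] by blast
qed

text \<open>After substituting
  \<open>r = \<alpha> + \<beta>\<close>, \<open>\<sigma>(r) = \<beta> - \<alpha>\<close> and expanding, the mixed terms cancel in pairs by
  invariance (together with antisymmetry of the bracket).\<close>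
lemma cybe_form_eq:
  assumes la: "lie_algebra br" and inv: "invariant_tensor br (beta_tensor r)"
  shows "cybe_form br r a b c = (br (alpha_of r a) (alpha_of r b) - alpha_of r (delta_br br r a b)
       - br (beta_of r a) (beta_of r b)) \<bullet> c"
proof -
  have bl: "bilinear br" using la by (simp add: lie_algebra_def)
  let ?A = "alpha_of r" and ?B = "beta_of r"
  have skew: "br x (?B y) \<bullet> z + br x (?B z) \<bullet> y = 0" for x y z
    using invariant_beta_skew[OF bl inv, of z x y] by (simp add: inner_commute)
  have antisym: "br u v \<bullet> w = - (br v u \<bullet> w)" for u v w
    by (subst lie_bracket_antisym[OF la]) simp
  note cancel = skew[of "?B a" c b] skew[of "?B b" c a] skew[of "?A a" c b]
    skew[of "?A b" c a] skew[of "?A c" b a]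
    antisym[of "?B b" "?B a" c] antisym[of "?A b" "?B a" c]
    antisym[of "?A c" "?B a" b] antisym[of "?A c" "?B b" a]
  show ?thesis
    unfolding cybe_form_def tmap_symmetrization tmap_flip_alpha_beta
    unfolding tmap_alpha_beta
    using cancel
    by (simp add: bilinear_ladd[OF bl] bilinear_radd[OF bl] bilinear_lsub[OF bl]
        bilinear_rsub[OF bl] bilinear_lmul[OF bl] bilinear_rmul[OF bl] inner_add_left
        inner_diff_left alpha_delta_pairing[OF bl] inner_commute[of a] inner_commute[of b])
qed

lemma typeII_CYBE_iff_alpha_identity:
  assumes la: "lie_algebra br" and inv: "invariant_tensor br (beta_tensor r)"
  shows "typeII_CYBE br r \<longleftrightarrow>
     (\<forall>a b. br (alpha_of r a) (alpha_of r b) - alpha_of r (delta_br br r a b)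
              = br (beta_of r a) (beta_of r b))"
proof -
  have bl: "bilinear br" using la by (simp add: lie_algebra_def)
  have "typeII_CYBE br r \<longleftrightarrow> (\<forall>a b c. (br (alpha_of r a) (alpha_of r b)
      - alpha_of r (delta_br br r a b) - br (beta_of r a) (beta_of r b)) \<bullet> c = 0)"
    unfolding typeII_CYBE_iff_cybe_form[OF bl] cybe_form_eq[OF la inv] ..
  then show ?thesis by (metis inner_eq_zero_iff inner_zero_left eq_iff_diff_eq_0)
qed

text \<open>(2) \<open>\<longleftrightarrow>\<close> (3), pointwise and for each sign: the imaginary part of the
  homomorphism equation is \<open>\<beta>[a*,b*]_\<delta> = [\<alpha> a*, \<beta> b*] + [\<beta> a*, \<alpha> b*]\<close>, which always
  holds, and the real part is the identity (2).\<close>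
lemma complexified_identity_iff:
  assumes la: "lie_algebra br" and inv: "invariant_tensor br (beta_tensor r)"
    and sign: "s \<in> {1, -1::real}"
  shows "alpha_pm_ibeta s r (delta_br br r a b)
           = cplx_br br (alpha_pm_ibeta s r a) (alpha_pm_ibeta s r b)
     \<longleftrightarrow> br (alpha_of r a) (alpha_of r b) - alpha_of r (delta_br br r a b)
           = br (beta_of r a) (beta_of r b)"
proof -
  have bl: "bilinear br" using la by (simp add: lie_algebra_def)
  have "s * s = 1" using sign by auto
  then have real_part: "br (s *\<^sub>R beta_of r a) (s *\<^sub>R beta_of r b) = br (beta_of r a) (beta_of r b)"
    by (simp add: bilinear_lmul[OF bl] bilinear_rmul[OF bl])
  have imag_part: "s *\<^sub>R beta_of r (delta_br br r a b)
      = br (alpha_of r a) (s *\<^sub>R beta_of r b) + br (s *\<^sub>R beta_of r a) (alpha_of r b)"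
    by (simp add: beta_delta_br[OF la inv] bilinear_lmul[OF bl] bilinear_rmul[OF bl]
        scaleR_add_right)
  show ?thesis
    unfolding alpha_pm_ibeta_def cplx_br_def prod_eq_iff fst_conv snd_conv real_part
      imag_part[symmetric]
    by (auto simp: algebra_simps)
qed

theorem corollary3p13:
  fixes br :: "real^'n \<Rightarrow> real^'n \<Rightarrow> real^'n" and r :: "real^'n^'n"
  assumes "lie_algebra br"
    and "invariant_tensor br (beta_tensor r)"
  shows "(typeII_CYBE br r \<longleftrightarrow>
           (\<forall>a b. br (alpha_of r a) (alpha_of r b) - alpha_of r (delta_br br r a b)
                  = br (beta_of r a) (beta_of r b)))
       \<and> (typeII_CYBE br r \<longleftrightarrow>
           (\<forall>s\<in>{1, -1}. \<forall>a b.
              alpha_pm_ibeta s r (delta_br br r a b)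
                = cplx_br br (alpha_pm_ibeta s r a) (alpha_pm_ibeta s r b)))"
  using typeII_CYBE_iff_alpha_identity[OF assms] complexified_identity_iff[OF assms]
  by blast

end
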